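(* Let $\kappa:G\to[1,\infty)$ and suppose $G$ is $\kappa$-decaying with decay constant $C$. Let $\psi:G\to\mathbb{C}$ satisfy $K:=\|\psi\kappa\|_\infty<\infty$. Then for every normalized 2-cocycle $\sigma$, $\psi\in MCF(G,\sigma)$ and $\|M_\psi\|\le CK$ (operator norm of $M_\psi$ on $C^*_r(G,\sigma)$).
   Context: $\sigma:G\times G\to\mathbb{T}$ is a normalized 2-cocycle ($\sigma(g,h)\sigma(gh,k)=\sigma(h,k)\sigma(g,hk)$, $\sigma(g,e)=\sigma(e,g)=1$); $\Lambda_\sigma(g)$ is the unitary on $\ell^2(G)$ with $(\Lambda_\sigma(g)\xi)(h)=\sigma(g,g^{-1}h)\xi(g^{-1}h)$, $\lambda=\Lambda_1$; $C^*_r(G,\sigma)$ is the operator-norm closure of $\mathrm{span}\,\Lambda_\sigma(G)$. $\mathcal{K}(G)$ = finitely supported functions; $\pi_\lambda(f)=\sum_g f(g)\lambda(g)$. For $\kappa:G\to[1,\infty)$, $\|\xi\|_{2,\kappa}=\|\xi\kappa\|_2$; $G$ is $\kappa$-decaying if $f\mapsto\pi_\lambda(f)$ is bounded from $(\mathcal{K}(G),\|\cdot\|_{2,\kappa})$ to $C^*_r(G,1)$ with operator norm, and the norm of this map is the $\kappa$-decay constant. For $x\in C^*_r(G,\sigma)$, $\widehat x=x\delta_e$. For $\varphi:G\to\mathbb{C}$, $M_\varphi$ is the linear map on $\mathrm{span}\,\Lambda_\sigma(G)$ with $M_\varphi(\Lambda_\sigma(g))=\varphi(g)\Lambda_\sigma(g)$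 (extended to $C^*_r(G,\sigma)$ when bounded). $MCF(G,\sigma)$ is the set of $\varphi$ such that $\sum_g\varphi(g)\widehat x(g)\Lambda_\sigma(g)$ converges in operator norm (as a net of finite partial sums) for every $x\in C^*_r(G,\sigma)$. *)

theory Defs
  imports "HOL-Analysis.Analysis"
begin

text \<open>The discrete group G is a type of class group_add, written additively:
  the product gh is g + h, the inverse is -g, the unit e is 0.
  Vectors of l2(G) are functions G -> complex; operators are maps on such functions,
  and only their behaviour on l2(G) matters.\<close>

type_synonym 'g vec = "'g \<Rightarrow> complex"
type_synonym 'g oper = "'g vec \<Rightarrow> 'g vec"

definition ell2 :: "'g vec set" where
  "ell2 = {\<xi>. (\<lambda>g. (cmod (\<xi> g))\<^sup>2) summable_on UNIV}"

definition norm2 :: "'g vec \<Rightarrow> real" where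
  "norm2 \<xi> = sqrt (\<Sum>\<^sub>\<infinity>g. (cmod (\<xi> g))\<^sup>2)"

definition op_bound :: "'g oper \<Rightarrow> real \<Rightarrow> bool" where
  "op_bound T c \<longleftrightarrow> (\<forall>\<xi>\<in>ell2. T \<xi> \<in> ell2 \<and> norm2 (T \<xi>) \<le> c * norm2 \<xi>)"

definition opnorm :: "'g oper \<Rightarrow> real" where
  "opnorm T = Inf {c. 0 \<le> c \<and> op_bound T c}"

definition op_diff :: "'g oper \<Rightarrow> 'g oper \<Rightarrow> 'g oper" where
  "op_diff A B = (\<lambda>\<xi> h. A \<xi> h - B \<xi> h)"

definition normalized_2cocycle :: "('g::group_add \<Rightarrow> 'g \<Rightarrow> complex) \<Rightarrow> bool" where
  "normalized_2cocycle \<sigma> \<longleftrightarrow>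
     (\<forall>g h. cmod (\<sigma> g h) = 1) \<and>
     (\<forall>g h k. \<sigma> g h * \<sigma> (g + h) k = \<sigma> h k * \<sigma> g (h + k)) \<and>
     (\<forall>g. \<sigma> g 0 = 1 \<and> \<sigma> 0 g = 1)"

definition Lam :: "('g::group_add \<Rightarrow> 'g \<Rightarrow> complex) \<Rightarrow> 'g \<Rightarrow> 'g oper" where
  "Lam \<sigma> g = (\<lambda>\<xi> h. \<sigma> g (-g + h) * \<xi> (-g + h))"

definition fin_supp :: "('g \<Rightarrow> complex) \<Rightarrow> bool" where
  "fin_supp f \<longleftrightarrow> finite {g. f g \<noteq> 0}"

definition Lam_comb :: "('g::group_add \<Rightarrow> 'g \<Rightarrow> complex) \<Rightarrow> ('g \<Rightarrow> complex) \<Rightarrow> 'g oper" where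
  "Lam_comb \<sigma> f = (\<lambda>\<xi> h. \<Sum>g\<in>{g. f g \<noteq> 0}. f g * Lam \<sigma> g \<xi> h)"

text \<open>C*_r(G,sigma): operator-norm closure of span Lambda_sigma(G).\<close>
definition Cred :: "('g::group_add \<Rightarrow> 'g \<Rightarrow> complex) \<Rightarrow> 'g oper set" where
  "Cred \<sigma> = {x. \<forall>\<epsilon>>0. \<exists>f. fin_supp f \<and> op_bound (op_diff x (Lam_comb \<sigma> f)) \<epsilon>}"

definition pi_lambda :: "('g::group_add \<Rightarrow> complex) \<Rightarrow> 'g oper" where
  "pi_lambda f = Lam_comb (\<lambda>_ _. 1) f"

definition norm2_kappa :: "('g \<Rightarrow> real) \<Rightarrow> ('g \<Rightarrow> complex) \<Rightarrow> real" where
  "norm2_kappa \<kappa> f = norm2 (\<lambda>g. f g * complex_of_real (\<kappa> g))"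

definition decay_bound :: "('g::group_add \<Rightarrow> real) \<Rightarrow> real \<Rightarrow> bool" where
  "decay_bound \<kappa> C \<longleftrightarrow> (\<forall>f. fin_supp f \<longrightarrow> opnorm (pi_lambda f) \<le> C * norm2_kappa \<kappa> f)"

definition kappa_decaying :: "('g::group_add \<Rightarrow> real) \<Rightarrow> bool" where
  "kappa_decaying \<kappa> \<longleftrightarrow> (\<exists>C. decay_bound \<kappa> C)"

definition decay_constant :: "('g::group_add \<Rightarrow> real) \<Rightarrow> real" where
  "decay_constant \<kappa> = Inf {C. 0 \<le> C \<and> decay_bound \<kappa> C}"

definition hat :: "'g::group_add oper \<Rightarrow> 'g \<Rightarrow> complex" where
  "hat x = x (\<lambda>h. if h = 0 then 1 else 0)"

definition mcf_partial :: "('g::group_add \<Rightarrow> 'g \<Rightarrow> complex) \<Rightarrow> ('g \<Rightarrow> complex) \<Rightarrow> 'g oper \<Rightarrow> 'g set \<Rightarrow> 'g oper" where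
  "mcf_partial \<sigma> \<phi> x F = (\<lambda>\<xi> h. \<Sum>g\<in>F. \<phi> g * hat x g * Lam \<sigma> g \<xi> h)"

definition mcf_converges_to :: "('g::group_add \<Rightarrow> 'g \<Rightarrow> complex) \<Rightarrow> ('g \<Rightarrow> complex) \<Rightarrow> 'g oper \<Rightarrow> 'g oper \<Rightarrow> bool" where
  "mcf_converges_to \<sigma> \<phi> x y \<longleftrightarrow>
     (\<forall>\<epsilon>>0. \<exists>F0. finite F0 \<and> (\<forall>F. finite F \<and> F0 \<subseteq> F \<longrightarrow> op_bound (op_diff (mcf_partial \<sigma> \<phi> x F) y) \<epsilon>))"

definition MCF :: "('g::group_add \<Rightarrow> 'g \<Rightarrow> complex) \<Rightarrow> ('g \<Rightarrow> complex) set" where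
  "MCF \<sigma> = {\<phi>. \<forall>x\<in>Cred \<sigma>. \<exists>y. mcf_converges_to \<sigma> \<phi> x y}"

definition Mmult :: "('g::group_add \<Rightarrow> 'g \<Rightarrow> complex) \<Rightarrow> ('g \<Rightarrow> complex) \<Rightarrow> 'g oper \<Rightarrow> 'g oper" where
  "Mmult \<sigma> \<phi> x = (SOME y. mcf_converges_to \<sigma> \<phi> x y)"

end

theory Submission
  imports Defs
begin

(* Since sigma is unimodular, a finite twisted sum  sum_{g in S} a(g) Lambda_sigma(g) xi  is
   dominated pointwise by the untwisted  pi_lambda(|a| 1_S) |xi|,  so kappa-decay bounds its
   l2-norm by  C ||a 1_S kappa||_2 ||xi||_2.  For  a = psi x-hat  this is at most
   C K ||x-hat 1_S||_2 ||xi||_2.  As x-hat = x delta_e lies in l2(G) with norm at most ||x||,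
   the partial sums converge unconditionally: the series converges pointwise absolutely, and by
   Fatou the tail outside a finite set F is bounded in operator norm by  C K ||x-hat 1_(G-F)||_2,
   which is small for F large.  The same estimate bounds the limit by  C K ||x||. *)

definition restrict_vec :: "'a set \<Rightarrow> 'a vec \<Rightarrow> 'a vec" where
  "restrict_vec A \<xi> = (\<lambda>g. if g \<in> A then \<xi> g else 0)"

lemma norm2_nonneg: "0 \<le> norm2 \<xi>"
  unfolding norm2_def by (simp add: infsum_nonneg)

lemma
  assumes "\<And>h. cmod (\<eta> h) = cmod (\<xi> h)"
  shows ell2_cmod_cong: "\<eta> \<in> ell2 \<longleftrightarrow> \<xi> \<in> ell2"
    and norm2_cmod_cong: "norm2 \<eta> = norm2 \<xi>"
  by (simp_all add: ell2_def norm2_def assms)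

lemma sum_power2_le_norm2:
  assumes "\<xi> \<in> ell2" "finite S"
  shows "(\<Sum>h\<in>S. (cmod (\<xi> h))\<^sup>2) \<le> (norm2 \<xi>)\<^sup>2"
proof -
  have "(\<Sum>h\<in>S. (cmod (\<xi> h))\<^sup>2) \<le> (\<Sum>\<^sub>\<infinity>g. (cmod (\<xi> g))\<^sup>2)"
    using assms by (intro finite_sum_le_infsum) (auto simp: ell2_def)
  also have "\<dots> = (norm2 \<xi>)\<^sup>2"
    unfolding norm2_def by (simp add: infsum_nonneg)
  finally show ?thesis .
qed

lemma ell2_norm2_leI:
  assumes "0 \<le> B" "\<And>S. finite S \<Longrightarrow> (\<Sum>h\<in>S. (cmod (\<eta> h))\<^sup>2) \<le> B\<^sup>2"
  shows "\<eta> \<in> ell2 \<and> norm2 \<eta> \<le> B"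
proof -
  have summable: "(\<lambda>g. (cmod (\<eta> g))\<^sup>2) summable_on UNIV"
    using assms(2) by (intro nonneg_bdd_above_summable_on bdd_aboveI[where M = "B\<^sup>2"]) auto
  have "(\<Sum>\<^sub>\<infinity>g. (cmod (\<eta> g))\<^sup>2) \<le> B\<^sup>2"
    using summable assms(2) by (intro infsum_le_finite_sums) auto
  then have "norm2 \<eta> \<le> sqrt (B\<^sup>2)"
    unfolding norm2_def by (rule real_sqrt_le_mono)
  with assms(1) summable show ?thesis
    by (simp add: ell2_def)
qed

lemma cmod_le_norm2:
  assumes "\<xi> \<in> ell2"
  shows "cmod (\<xi> h) \<le> norm2 \<xi>"
  using sum_power2_le_norm2[OF assms, of "{h}"] norm2_nonneg by (auto intro: power2_le_imp_le)

lemma ell2_norm2_le_dominated: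
  assumes "\<xi> \<in> ell2" "\<And>h. cmod (\<eta> h) \<le> cmod (\<xi> h)"
  shows "\<eta> \<in> ell2 \<and> norm2 \<eta> \<le> norm2 \<xi>"
proof (rule ell2_norm2_leI[OF norm2_nonneg])
  fix S :: "'a set"
  assume "finite S"
  have "(\<Sum>h\<in>S. (cmod (\<eta> h))\<^sup>2) \<le> (\<Sum>h\<in>S. (cmod (\<xi> h))\<^sup>2)"
    using assms(2) by (intro sum_mono power_mono) auto
  also have "\<dots> \<le> (norm2 \<xi>)\<^sup>2"
    using assms(1) \<open>finite S\<close> by (rule sum_power2_le_norm2)
  finally show "(\<Sum>h\<in>S. (cmod (\<eta> h))\<^sup>2) \<le> (norm2 \<xi>)\<^sup>2" .
qed

lemma ell2_norm2_scale:
  assumes "\<xi> \<in> ell2"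
  shows "(\<lambda>h. c * \<xi> h) \<in> ell2 \<and> norm2 (\<lambda>h. c * \<xi> h) \<le> cmod c * norm2 \<xi>"
proof (rule ell2_norm2_leI)
  show "0 \<le> cmod c * norm2 \<xi>"
    by (simp add: norm2_nonneg)
  fix S :: "'a set"
  assume "finite S"
  have "(\<Sum>h\<in>S. (cmod (c * \<xi> h))\<^sup>2) = (cmod c)\<^sup>2 * (\<Sum>h\<in>S. (cmod (\<xi> h))\<^sup>2)"
    by (simp add: norm_mult power_mult_distrib sum_distrib_left)
  also have "\<dots> \<le> (cmod c)\<^sup>2 * (norm2 \<xi>)\<^sup>2"
    using sum_power2_le_norm2[OF assms \<open>finite S\<close>] by (rule mult_left_mono) simp
  finally show "(\<Sum>h\<in>S. (cmod (c * \<xi> h))\<^sup>2) \<le> (cmod c * norm2 \<xi>)\<^sup>2"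
    by (simp add: power_mult_distrib)
qed

lemma ell2_norm2_triangle:
  assumes "\<xi> \<in> ell2" "\<zeta> \<in> ell2" "\<And>h. cmod (\<eta> h) \<le> cmod (\<xi> h) + cmod (\<zeta> h)"
  shows "\<eta> \<in> ell2 \<and> norm2 \<eta> \<le> norm2 \<xi> + norm2 \<zeta>"
proof (rule ell2_norm2_leI)
  show "0 \<le> norm2 \<xi> + norm2 \<zeta>"
    by (simp add: norm2_nonneg)
  fix S :: "'a set"
  assume S: "finite S"
  have L2_set_le: "L2_set (\<lambda>h. cmod (v h)) S \<le> norm2 v" if "v \<in> ell2" for v :: "'a vec"
    using real_sqrt_le_mono[OF sum_power2_le_norm2[OF that S]]
    by (simp add: L2_set_def norm2_nonneg)
  have "(\<Sum>h\<in>S. (cmod (\<eta> h))\<^sup>2) \<le> (\<Sum>h\<in>S. (cmod (\<xi> h) + cmod (\<zeta> h))\<^sup>2)"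
    using assms(3) by (intro sum_mono power_mono) auto
  also have "\<dots> = (L2_set (\<lambda>h. cmod (\<xi> h) + cmod (\<zeta> h)) S)\<^sup>2"
    by (simp add: L2_set_def sum_nonneg)
  also have "\<dots> \<le> (L2_set (\<lambda>h. cmod (\<xi> h)) S + L2_set (\<lambda>h. cmod (\<zeta> h)) S)\<^sup>2"
    by (intro power_mono L2_set_triangle_ineq L2_set_nonneg)
  also have "\<dots> \<le> (norm2 \<xi> + norm2 \<zeta>)\<^sup>2"
    using assms(1,2) by (intro power_mono add_mono add_nonneg_nonneg L2_set_nonneg L2_set_le)
  finally show "(\<Sum>h\<in>S. (cmod (\<eta> h))\<^sup>2) \<le> (norm2 \<xi> + norm2 \<zeta>)\<^sup>2" .
qed

lemma ell2_norm2_sum: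
  assumes "finite F" "\<And>g. g \<in> F \<Longrightarrow> v g \<in> ell2"
  shows "(\<lambda>h. \<Sum>g\<in>F. v g h) \<in> ell2 \<and> norm2 (\<lambda>h. \<Sum>g\<in>F. v g h) \<le> (\<Sum>g\<in>F. norm2 (v g))"
  using assms
proof (induction F rule: finite_induct)
  case empty
  show ?case
    by simp (rule ell2_norm2_leI; simp)
next
  case (insert g F)
  then have "(\<lambda>h. \<Sum>g\<in>insert g F. v g h) \<in> ell2 \<and>
      norm2 (\<lambda>h. \<Sum>g\<in>insert g F. v g h) \<le> norm2 (v g) + norm2 (\<lambda>h. \<Sum>g\<in>F. v g h)"
    by (intro ell2_norm2_triangle) (auto simp: norm_triangle_ineq)
  with insert show ?case
    by auto
qed

lemma ell2_norm2_le_limit: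
  fixes v :: "'i \<Rightarrow> 'a vec"
  assumes "F \<noteq> bot" "\<And>h. ((\<lambda>i. v i h) \<longlongrightarrow> \<eta> h) F"
    and "eventually (\<lambda>i. v i \<in> ell2 \<and> norm2 (v i) \<le> B) F" "0 \<le> B"
  shows "\<eta> \<in> ell2 \<and> norm2 \<eta> \<le> B"
proof (rule ell2_norm2_leI[OF assms(4)])
  fix S :: "'a set"
  assume S: "finite S"
  have "((\<lambda>i. \<Sum>h\<in>S. (cmod (v i h))\<^sup>2) \<longlongrightarrow> (\<Sum>h\<in>S. (cmod (\<eta> h))\<^sup>2)) F"
    by (intro tendsto_intros assms(2))
  moreover have "eventually (\<lambda>i. (\<Sum>h\<in>S. (cmod (v i h))\<^sup>2) \<le> B\<^sup>2) F"
    using assms(3)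
  proof (rule eventually_mono)
    fix i
    assume i: "v i \<in> ell2 \<and> norm2 (v i) \<le> B"
    then have "(\<Sum>h\<in>S. (cmod (v i h))\<^sup>2) \<le> (norm2 (v i))\<^sup>2"
      using S by (intro sum_power2_le_norm2) auto
    also have "\<dots> \<le> B\<^sup>2"
      using i by (simp add: power_mono norm2_nonneg)
    finally show "(\<Sum>h\<in>S. (cmod (v i h))\<^sup>2) \<le> B\<^sup>2" .
  qed
  ultimately show "(\<Sum>h\<in>S. (cmod (\<eta> h))\<^sup>2) \<le> B\<^sup>2"
    using assms(1) by (rule tendsto_upperbound)
qed

lemma ell2_restrict_vec:
  assumes "\<xi> \<in> ell2"
  shows "restrict_vec A \<xi> \<in> ell2"
  using ell2_norm2_le_dominated[OF assms] by (simp add: restrict_vec_def)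

lemma norm2_restrict_vec_mono:
  assumes "\<xi> \<in> ell2" "A \<subseteq> B"
  shows "norm2 (restrict_vec A \<xi>) \<le> norm2 (restrict_vec B \<xi>)"
proof -
  have "cmod (restrict_vec A \<xi> h) \<le> cmod (restrict_vec B \<xi> h)" for h
    using assms(2) by (auto simp: restrict_vec_def)
  then show ?thesis
    using ell2_norm2_le_dominated[OF ell2_restrict_vec[OF assms(1)]] by blast
qed

lemma norm2_restrict_vec_le:
  assumes "\<xi> \<in> ell2"
  shows "norm2 (restrict_vec A \<xi>) \<le> norm2 \<xi>"
  using norm2_restrict_vec_mono[OF assms subset_UNIV] by (simp add: restrict_vec_def)

lemma ell2_small_tail:
  assumes "\<xi> \<in> ell2" "0 < \<delta>"
  shows "\<exists>F. finite F \<and> norm2 (restrict_vec (- F) \<xi>) \<le> \<delta>"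
proof -
  let ?f = "\<lambda>g. (cmod (\<xi> g))\<^sup>2"
  have summable: "?f summable_on UNIV"
    using assms(1) by (simp add: ell2_def)
  then have "(sum ?f \<longlongrightarrow> infsum ?f UNIV) (finite_subsets_at_top UNIV)"
    by (simp add: has_sum_def[symmetric])
  then have "eventually (\<lambda>F. dist (sum ?f F) (infsum ?f UNIV) < \<delta>\<^sup>2) (finite_subsets_at_top UNIV)"
    using assms(2) by (simp add: tendsto_iff)
  then obtain F where F: "finite F" "dist (sum ?f F) (infsum ?f UNIV) < \<delta>\<^sup>2"
    unfolding eventually_finite_subsets_at_top by auto
  have "norm2 (restrict_vec (- F) \<xi>) \<le> \<delta>"
  proof (rule conjunct2[OF ell2_norm2_leI])
    fix S :: "'a set"
    assume S: "finite S"
    have "(\<Sum>h\<in>S. (cmod (restrict_vec (- F) \<xi> h))\<^sup>2) = sum ?f (S - F)"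
      using S by (intro sum.mono_neutral_cong_right) (auto simp: restrict_vec_def)
    also have "\<dots> = sum ?f ((S - F) \<union> F) - sum ?f F"
      using S F by (subst sum.union_disjoint) auto
    also have "\<dots> \<le> infsum ?f UNIV - sum ?f F"
      using S F by (simp add: finite_sum_le_infsum[OF summable])
    also have "\<dots> < \<delta>\<^sup>2"
      using F(2) by (simp add: dist_real_def)
    finally show "(\<Sum>h\<in>S. (cmod (restrict_vec (- F) \<xi> h))\<^sup>2) \<le> \<delta>\<^sup>2"
      by simp
  qed (use assms in simp)
  with F show ?thesis
    by blast
qed

lemma le_cInf_mult:
  fixes a b :: real
  assumes "A \<noteq> {}" "0 \<le> b" "\<And>c. c \<in> A \<Longrightarrow> a \<le> c * b"
  shows "a \<le> Inf A * b"
proof (cases "b = 0")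
  case True
  with assms(1,3) show ?thesis
    by auto
next
  case False
  with assms(2) have "0 < b"
    by simp
  have "a / b \<le> Inf A"
    using assms(1,3) \<open>0 < b\<close> by (intro cInf_greatest) (auto simp: divide_le_eq)
  with \<open>0 < b\<close> show ?thesis
    by (simp add: divide_le_eq)
qed

lemma op_bound_mono:
  assumes "op_bound T c" "c \<le> d"
  shows "op_bound T d"
  unfolding op_bound_def
proof (intro ballI)
  fix \<xi> :: "'a vec"
  assume "\<xi> \<in> ell2"
  with assms(1) have "T \<xi> \<in> ell2" "norm2 (T \<xi>) \<le> c * norm2 \<xi>"
    by (auto simp: op_bound_def)
  moreover have "c * norm2 \<xi> \<le> d * norm2 \<xi>"
    using assms(2) norm2_nonneg by (rule mult_right_mono)
  ultimately show "T \<xi> \<in> ell2 \<and> norm2 (T \<xi>) \<le> d * norm2 \<xi>"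
    by simp
qed

lemma
  assumes "op_bound T c" "0 \<le> c"
  shows op_bound_opnorm: "op_bound T (opnorm T)"
    and opnorm_le: "opnorm T \<le> c"
proof -
  let ?A = "{c. 0 \<le> c \<and> op_bound T c}"
  have "?A \<noteq> {}"
    using assms by auto
  show "op_bound T (opnorm T)"
    unfolding op_bound_def
  proof (intro ballI conjI)
    fix \<xi> :: "'a vec"
    assume \<xi>: "\<xi> \<in> ell2"
    show "T \<xi> \<in> ell2"
      using assms(1) \<xi> by (simp add: op_bound_def)
    show "norm2 (T \<xi>) \<le> opnorm T * norm2 \<xi>"
      unfolding opnorm_def using \<open>?A \<noteq> {}\<close> norm2_nonneg
      by (rule le_cInf_mult) (use \<xi> in \<open>simp add: op_bound_def\<close>)
  qed
  show "opnorm T \<le> c"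
    unfolding opnorm_def using assms by (intro cInf_lower bdd_belowI[where m = 0]) auto
qed

lemma opnorm_le_epsilon:
  assumes "\<And>\<epsilon>. 0 < \<epsilon> \<Longrightarrow> op_bound T (B + \<epsilon>)" "0 \<le> B"
  shows "opnorm T \<le> B"
proof (rule field_le_epsilon)
  fix \<epsilon> :: real
  assume "0 < \<epsilon>"
  with assms show "opnorm T \<le> B + \<epsilon>"
    by (intro opnorm_le) auto
qed

lemma Lam_op_bound:
  assumes "\<And>a b. cmod (\<sigma> a b) \<le> 1"
  shows "op_bound (Lam \<sigma> g) 1"
  unfolding op_bound_def
proof (intro ballI)
  fix \<xi> :: "'a vec"
  assume \<xi>: "\<xi> \<in> ell2"
  show "Lam \<sigma> g \<xi> \<in> ell2 \<and> norm2 (Lam \<sigma> g \<xi>) \<le> 1 * norm2 \<xi>"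
  proof (simp, rule ell2_norm2_leI[OF norm2_nonneg])
    fix S :: "'a set"
    assume S: "finite S"
    have "(\<Sum>h\<in>S. (cmod (Lam \<sigma> g \<xi> h))\<^sup>2) \<le> (\<Sum>h\<in>S. (cmod (\<xi> (-g + h)))\<^sup>2)"
      using assms[of g] by (intro sum_mono power_mono) (auto simp: Lam_def norm_mult mult_left_le_one_le)
    also have "\<dots> = (\<Sum>k\<in>(\<lambda>h. -g + h) ` S. (cmod (\<xi> k))\<^sup>2)"
      by (subst sum.reindex) (auto simp: inj_on_def)
    also have "\<dots> \<le> (norm2 \<xi>)\<^sup>2"
      using \<xi> S by (intro sum_power2_le_norm2) auto
    finally show "(\<Sum>h\<in>S. (cmod (Lam \<sigma> g \<xi> h))\<^sup>2) \<le> (norm2 \<xi>)\<^sup>2" .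
  qed
qed

lemma Lam_comb_op_bound:
  assumes "\<And>a b. cmod (\<sigma> a b) \<le> 1" "fin_supp f"
  shows "op_bound (Lam_comb \<sigma> f) (\<Sum>g\<in>{g. f g \<noteq> 0}. cmod (f g))"
  unfolding op_bound_def
proof (intro ballI)
  fix \<xi> :: "'a vec"
  assume \<xi>: "\<xi> \<in> ell2"
  let ?supp = "{g. f g \<noteq> 0}"
  let ?term = "\<lambda>g h. f g * Lam \<sigma> g \<xi> h"
  have scaled: "?term g \<in> ell2 \<and> norm2 (?term g) \<le> cmod (f g) * norm2 \<xi>" for g
  proof -
    have Lam: "Lam \<sigma> g \<xi> \<in> ell2" "norm2 (Lam \<sigma> g \<xi>) \<le> norm2 \<xi>"
      using Lam_op_bound[of \<sigma> g] assms(1) \<xi> by (simp_all add: op_bound_def)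
    moreover have "cmod (f g) * norm2 (Lam \<sigma> g \<xi>) \<le> cmod (f g) * norm2 \<xi>"
      using Lam(2) by (rule mult_left_mono) simp
    ultimately show ?thesis
      using ell2_norm2_scale[of "Lam \<sigma> g \<xi>" "f g"] by linarith
  qed
  have "Lam_comb \<sigma> f \<xi> \<in> ell2 \<and> norm2 (Lam_comb \<sigma> f \<xi>) \<le> (\<Sum>g\<in>?supp. norm2 (?term g))"
    unfolding Lam_comb_def using assms(2) scaled by (intro ell2_norm2_sum) (auto simp: fin_supp_def)
  moreover have "(\<Sum>g\<in>?supp. norm2 (?term g)) \<le> (\<Sum>g\<in>?supp. cmod (f g)) * norm2 \<xi>"
    unfolding sum_distrib_right using scaled by (intro sum_mono) auto
  ultimately show "Lam_comb \<sigma> f \<xi> \<in> ell2 \<and> norm2 (Lam_comb \<sigma> f \<xi>) \<le> (\<Sum>g\<in>?supp. cmod (f g)) * norm2 \<xi>"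
    by linarith
qed

lemma Cred_op_bound:
  assumes "normalized_2cocycle \<sigma>" "x \<in> Cred \<sigma>"
  obtains c where "op_bound x c" "0 \<le> c"
proof -
  have "\<forall>\<epsilon>>0. \<exists>f. fin_supp f \<and> op_bound (op_diff x (Lam_comb \<sigma> f)) \<epsilon>"
    using assms(2) by (simp add: Cred_def)
  then obtain f where f: "fin_supp f" "op_bound (op_diff x (Lam_comb \<sigma> f)) 1"
    using zero_less_one by blast
  let ?c = "\<Sum>g\<in>{g. f g \<noteq> 0}. cmod (f g)"
  have comb: "op_bound (Lam_comb \<sigma> f) ?c"
    using assms(1) f(1) by (intro Lam_comb_op_bound) (simp_all add: normalized_2cocycle_def)
  have "op_bound x (1 + ?c)"
    unfolding op_bound_def
  proof (intro ballI)
    fix \<xi> :: "'a vec"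
    assume "\<xi> \<in> ell2"
    then have diff: "op_diff x (Lam_comb \<sigma> f) \<xi> \<in> ell2 \<and> norm2 (op_diff x (Lam_comb \<sigma> f) \<xi>) \<le> norm2 \<xi>"
      and comb\<xi>: "Lam_comb \<sigma> f \<xi> \<in> ell2 \<and> norm2 (Lam_comb \<sigma> f \<xi>) \<le> ?c * norm2 \<xi>"
      using f(2) comb by (simp_all add: op_bound_def)
    have "cmod (x \<xi> h) \<le> cmod (op_diff x (Lam_comb \<sigma> f) \<xi> h) + cmod (Lam_comb \<sigma> f \<xi> h)" for h
      using norm_triangle_ineq[of "op_diff x (Lam_comb \<sigma> f) \<xi> h" "Lam_comb \<sigma> f \<xi> h"]
      by (simp add: op_diff_def)
    with diff comb\<xi> show "x \<xi> \<in> ell2 \<and> norm2 (x \<xi>) \<le> (1 + ?c) * norm2 \<xi>"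
      using ell2_norm2_triangle[of "op_diff x (Lam_comb \<sigma> f) \<xi>" "Lam_comb \<sigma> f \<xi>" "x \<xi>"]
      by (auto simp: distrib_right)
  qed
  moreover have "0 \<le> 1 + ?c"
    by (simp add: sum_nonneg)
  ultimately show ?thesis
    using that by blast
qed

lemma norm2_delta: "norm2 (\<lambda>h::'a::group_add. if h = 0 then 1 else 0) = 1"
  and ell2_delta: "(\<lambda>h::'a::group_add. if h = 0 then 1 else 0) \<in> ell2"
proof -
  let ?\<delta> = "\<lambda>h::'a. if h = 0 then 1 else (0::complex)"
  have "?\<delta> \<in> ell2 \<and> norm2 ?\<delta> \<le> 1"
  proof (rule ell2_norm2_leI)
    fix S :: "'a set"
    assume "finite S"
    have "(\<Sum>h\<in>S. (cmod (?\<delta> h))\<^sup>2) = (\<Sum>h\<in>S. if h = 0 then 1 else 0)"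
      by (rule sum.cong) auto
    also have "\<dots> \<le> 1\<^sup>2"
      using \<open>finite S\<close> by (simp add: sum.delta)
    finally show "(\<Sum>h\<in>S. (cmod (?\<delta> h))\<^sup>2) \<le> 1\<^sup>2" .
  qed simp
  moreover have "1 \<le> norm2 ?\<delta>"
    using cmod_le_norm2[of ?\<delta> 0] calculation by simp
  ultimately show "norm2 ?\<delta> = 1" "?\<delta> \<in> ell2"
    by auto
qed

lemma norm2_hat_le:
  assumes "op_bound x c"
  shows "hat x \<in> ell2 \<and> norm2 (hat x) \<le> c"
proof -
  have "x (\<lambda>h. if h = 0 then 1 else 0) \<in> ell2 \<and>
      norm2 (x (\<lambda>h. if h = 0 then 1 else 0)) \<le> c * norm2 (\<lambda>h::'a. if h = 0 then 1 else 0)"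
    using assms ell2_delta unfolding op_bound_def by blast
  then show ?thesis
    by (simp add: hat_def norm2_delta)
qed

lemma
  assumes "kappa_decaying \<kappa>"
  shows decay_bound_decay_constant: "decay_bound \<kappa> (decay_constant \<kappa>)"
    and decay_constant_nonneg: "0 \<le> decay_constant \<kappa>"
proof -
  let ?A = "{C. 0 \<le> C \<and> decay_bound \<kappa> C}"
  obtain C where C: "decay_bound \<kappa> C"
    using assms by (auto simp: kappa_decaying_def)
  have "decay_bound \<kappa> (max C 0)"
    unfolding decay_bound_def
  proof (intro allI impI)
    fix f :: "'a \<Rightarrow> complex"
    assume "fin_supp f"
    with C have "opnorm (pi_lambda f) \<le> C * norm2_kappa \<kappa> f"
      by (simp add: decay_bound_def)
    also have "\<dots> \<le> max C 0 * norm2_kappa \<kappa> f"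
      by (intro mult_right_mono) (simp_all add: norm2_kappa_def norm2_nonneg)
    finally show "opnorm (pi_lambda f) \<le> max C 0 * norm2_kappa \<kappa> f" .
  qed
  then have "?A \<noteq> {}"
    by (intro notI) (metis (mono_tags, lifting) empty_iff max.cobounded2 mem_Collect_eq)
  show "decay_bound \<kappa> (decay_constant \<kappa>)"
    unfolding decay_bound_def
  proof (intro allI impI)
    fix f :: "'a \<Rightarrow> complex"
    assume "fin_supp f"
    show "opnorm (pi_lambda f) \<le> decay_constant \<kappa> * norm2_kappa \<kappa> f"
      unfolding decay_constant_def using \<open>?A \<noteq> {}\<close>
      by (rule le_cInf_mult) (use \<open>fin_supp f\<close> in \<open>auto simp: norm2_kappa_def norm2_nonneg decay_bound_def\<close>)
  qed
  show "0 \<le> decay_constant \<kappa>"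
    unfolding decay_constant_def using \<open>?A \<noteq> {}\<close> by (intro cInf_greatest) auto
qed

lemma pi_lambda_op_bound:
  assumes "decay_bound \<kappa> C" "fin_supp f"
  shows "op_bound (pi_lambda f) (C * norm2_kappa \<kappa> f)"
proof -
  have "op_bound (pi_lambda f) (\<Sum>g\<in>{g. f g \<noteq> 0}. cmod (f g))"
    unfolding pi_lambda_def using assms(2) by (intro Lam_comb_op_bound) simp_all
  then have "op_bound (pi_lambda f) (opnorm (pi_lambda f))"
    by (rule op_bound_opnorm) (simp add: sum_nonneg)
  moreover have "opnorm (pi_lambda f) \<le> C * norm2_kappa \<kappa> f"
    using assms by (simp add: decay_bound_def)
  ultimately show ?thesis
    by (rule op_bound_mono)
qed

lemma twisted_abs_sum_norm2_le:
  assumes "\<forall>a b. cmod (\<sigma> a b) = 1" "decay_bound \<kappa> C" "finite S" "\<xi> \<in> ell2"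
  shows "(\<lambda>h. complex_of_real (\<Sum>g\<in>S. cmod (a g * Lam \<sigma> g \<xi> h))) \<in> ell2 \<and>
    norm2 (\<lambda>h. complex_of_real (\<Sum>g\<in>S. cmod (a g * Lam \<sigma> g \<xi> h)))
      \<le> C * norm2_kappa \<kappa> (restrict_vec S a) * norm2 \<xi>"
proof -
  define f where "f = restrict_vec S (\<lambda>g. complex_of_real (cmod (a g)))"
  let ?abs\<xi> = "\<lambda>k. complex_of_real (cmod (\<xi> k))"
  have supp: "{g. f g \<noteq> 0} \<subseteq> S"
    by (auto simp: f_def restrict_vec_def)
  then have "fin_supp f"
    unfolding fin_supp_def using assms(3) by (rule finite_subset)
  have "pi_lambda f ?abs\<xi> h = (\<Sum>g\<in>{g. f g \<noteq> 0}. f g * ?abs\<xi> (-g + h))" for h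
    by (simp add: pi_lambda_def Lam_comb_def Lam_def)
  also have "(\<Sum>g\<in>{g. f g \<noteq> 0}. f g * ?abs\<xi> (-g + h)) = (\<Sum>g\<in>S. f g * ?abs\<xi> (-g + h))" for h
    using assms(3) supp by (intro sum.mono_neutral_left) auto
  also have "(\<Sum>g\<in>S. f g * ?abs\<xi> (-g + h)) = complex_of_real (\<Sum>g\<in>S. cmod (a g * Lam \<sigma> g \<xi> h))" for h
    using assms(1) by (simp add: f_def restrict_vec_def Lam_def norm_mult)
  finally have pi_lambda_eq: "pi_lambda f ?abs\<xi> = (\<lambda>h. complex_of_real (\<Sum>g\<in>S. cmod (a g * Lam \<sigma> g \<xi> h)))"
    by (rule ext)
  have "norm2_kappa \<kappa> f = norm2_kappa \<kappa> (restrict_vec S a)"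
    unfolding norm2_kappa_def by (rule norm2_cmod_cong) (simp add: f_def restrict_vec_def norm_mult)
  moreover have "?abs\<xi> \<in> ell2" "norm2 ?abs\<xi> = norm2 \<xi>"
    using assms(4) ell2_cmod_cong[of ?abs\<xi> \<xi>] norm2_cmod_cong[of ?abs\<xi> \<xi>] by simp_all
  moreover have "pi_lambda f ?abs\<xi> \<in> ell2 \<and> norm2 (pi_lambda f ?abs\<xi>) \<le> C * norm2_kappa \<kappa> f * norm2 ?abs\<xi>"
    using pi_lambda_op_bound[OF assms(2) \<open>fin_supp f\<close>] \<open>?abs\<xi> \<in> ell2\<close> unfolding op_bound_def by blast
  ultimately show ?thesis
    unfolding pi_lambda_eq by simp
qed

lemma
  assumes "\<forall>a b. cmod (\<sigma> a b) = 1" "decay_bound \<kappa> C" "finite S" "\<xi> \<in> ell2"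
  shows twisted_sum_norm2_le: "(\<lambda>h. \<Sum>g\<in>S. a g * Lam \<sigma> g \<xi> h) \<in> ell2 \<and>
      norm2 (\<lambda>h. \<Sum>g\<in>S. a g * Lam \<sigma> g \<xi> h) \<le> C * norm2_kappa \<kappa> (restrict_vec S a) * norm2 \<xi>"
    and twisted_abs_sum_le: "(\<Sum>g\<in>S. cmod (a g * Lam \<sigma> g \<xi> h)) \<le> C * norm2_kappa \<kappa> (restrict_vec S a) * norm2 \<xi>"
proof -
  let ?abs_sum = "\<lambda>h. \<Sum>g\<in>S. cmod (a g * Lam \<sigma> g \<xi> h)"
  let ?B = "C * norm2_kappa \<kappa> (restrict_vec S a) * norm2 \<xi>"
  have abs_sum: "(\<lambda>h. complex_of_real (?abs_sum h)) \<in> ell2" "norm2 (\<lambda>h. complex_of_real (?abs_sum h)) \<le> ?B"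
    using twisted_abs_sum_norm2_le[OF assms, of a] by simp_all
  have cmod_abs_sum: "cmod (complex_of_real (?abs_sum h)) = ?abs_sum h" for h
    by (simp only: norm_of_real) (rule abs_of_nonneg, rule sum_nonneg, simp)
  have "cmod (\<Sum>g\<in>S. a g * Lam \<sigma> g \<xi> h) \<le> cmod (complex_of_real (?abs_sum h))" for h
    unfolding cmod_abs_sum by (rule norm_sum)
  with abs_sum show "(\<lambda>h. \<Sum>g\<in>S. a g * Lam \<sigma> g \<xi> h) \<in> ell2 \<and> norm2 (\<lambda>h. \<Sum>g\<in>S. a g * Lam \<sigma> g \<xi> h) \<le> ?B"
    using ell2_norm2_le_dominated[OF abs_sum(1)] by (meson order.trans)
  show "?abs_sum h \<le> ?B"
    using cmod_le_norm2[OF abs_sum(1), of h] abs_sum(2) unfolding cmod_abs_sum by linarith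
qed

lemma norm2_kappa_mult_le:
  assumes "\<forall>g. 0 \<le> \<kappa> g" "\<forall>g. cmod (\<psi> g) * \<kappa> g \<le> K" "v \<in> ell2"
  shows "norm2_kappa \<kappa> (\<lambda>g. \<psi> g * v g) \<le> K * norm2 v"
proof -
  have "0 \<le> cmod (\<psi> g) * \<kappa> g" for g
    using assms(1) by simp
  then have "0 \<le> K"
    using assms(2) order.trans by blast
  have "cmod (\<psi> g) * \<kappa> g * cmod (v g) \<le> K * cmod (v g)" for g
    using assms(2) by (intro mult_right_mono) auto
  then have dominated: "cmod (\<psi> g * v g * complex_of_real (\<kappa> g)) \<le> cmod (complex_of_real K * v g)" for g
    using assms(1) \<open>0 \<le> K\<close> by (simp add: norm_mult mult.commute mult.left_commute)
  have "norm2 (\<lambda>g. \<psi> g * v g * complex_of_real (\<kappa> g)) \<le> norm2 (\<lambda>g. complex_of_real K * v g)"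
    by (rule conjunct2[OF ell2_norm2_le_dominated[OF conjunct1[OF ell2_norm2_scale[OF assms(3)]] dominated]])
  also have "\<dots> \<le> K * norm2 v"
    using ell2_norm2_scale[OF assms(3), of "complex_of_real K"] \<open>0 \<le> K\<close> by simp
  finally show ?thesis
    by (simp add: norm2_kappa_def)
qed

locale dominated_operator_series =
  fixes u :: "'i \<Rightarrow> 'a oper" and w :: "'i vec" and M :: real
  assumes w_ell2: "w \<in> ell2"
    and M_nonneg: "0 \<le> M"
    and partial_sum_bound: "\<And>S \<xi>. finite S \<Longrightarrow> \<xi> \<in> ell2 \<Longrightarrow>
      (\<lambda>h. \<Sum>g\<in>S. u g \<xi> h) \<in> ell2 \<and>
      norm2 (\<lambda>h. \<Sum>g\<in>S. u g \<xi> h) \<le> M * norm2 (restrict_vec S w) * norm2 \<xi>"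
    and abs_partial_sum_bound: "\<And>S \<xi> h. finite S \<Longrightarrow> \<xi> \<in> ell2 \<Longrightarrow>
      (\<Sum>g\<in>S. cmod (u g \<xi> h)) \<le> M * norm2 w * norm2 \<xi>"
begin

definition partial_sum :: "'i set \<Rightarrow> 'a oper" where
  "partial_sum F = (\<lambda>\<xi> h. \<Sum>g\<in>F. u g \<xi> h)"

definition series_sum :: "'a oper" where
  "series_sum = (\<lambda>\<xi> h. \<Sum>\<^sub>\<infinity>g. u g \<xi> h)"

definition converges_to :: "'a oper \<Rightarrow> bool" where
  "converges_to y \<longleftrightarrow>
    (\<forall>\<epsilon>>0. \<exists>F0. finite F0 \<and>
      (\<forall>F. finite F \<and> F0 \<subseteq> F \<longrightarrow> op_bound (op_diff (partial_sum F) y) \<epsilon>))"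

lemma summable_on_terms:
  assumes "\<xi> \<in> ell2"
  shows "(\<lambda>g. u g \<xi> h) summable_on B"
proof -
  have "(\<lambda>g. norm (u g \<xi> h)) summable_on UNIV"
    using abs_partial_sum_bound[OF _ assms]
    by (intro nonneg_bdd_above_summable_on bdd_aboveI[where M = "M * norm2 w * norm2 \<xi>"]) auto
  then have "(\<lambda>g. u g \<xi> h) summable_on UNIV"
    by (rule abs_summable_summable)
  then show ?thesis
    by (rule summable_on_subset_banach) simp
qed

lemma tail_sum_norm2_le:
  assumes "F0 \<subseteq> F" "\<xi> \<in> ell2"
  shows "(\<lambda>h. \<Sum>\<^sub>\<infinity>g\<in>- F. u g \<xi> h) \<in> ell2 \<and>
    norm2 (\<lambda>h. \<Sum>\<^sub>\<infinity>g\<in>- F. u g \<xi> h) \<le> M * norm2 (restrict_vec (- F0) w) * norm2 \<xi>"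
  (is "?tail \<in> ell2 \<and> norm2 ?tail \<le> ?B")
proof (rule ell2_norm2_le_limit[where F = "finite_subsets_at_top (- F)" and v = "\<lambda>S. partial_sum S \<xi>"])
  show "finite_subsets_at_top (- F) \<noteq> bot"
    by (rule finite_subsets_at_top_neq_bot)
  show "((\<lambda>S. partial_sum S \<xi> h) \<longlongrightarrow> ?tail h) (finite_subsets_at_top (- F))" for h
    using has_sum_infsum[OF summable_on_terms[OF assms(2)]]
    by (simp add: has_sum_def partial_sum_def)
  show "\<forall>\<^sub>F S in finite_subsets_at_top (- F). partial_sum S \<xi> \<in> ell2 \<and> norm2 (partial_sum S \<xi>) \<le> ?B"
  proof (rule eventually_finite_subsets_at_top_weakI)
    fix S
    assume S: "finite S" "S \<subseteq> - F"
    then have "norm2 (restrict_vec S w) \<le> norm2 (restrict_vec (- F0) w)"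
      using assms(1) w_ell2 by (intro norm2_restrict_vec_mono) auto
    then have "M * norm2 (restrict_vec S w) * norm2 \<xi> \<le> ?B"
      using M_nonneg by (intro mult_right_mono mult_left_mono norm2_nonneg)
    with partial_sum_bound[OF S(1) assms(2)] show "partial_sum S \<xi> \<in> ell2 \<and> norm2 (partial_sum S \<xi>) \<le> ?B"
      by (simp add: partial_sum_def)
  qed
  show "0 \<le> ?B"
    using M_nonneg by (simp add: norm2_nonneg)
qed

lemma partial_sum_tail_op_bound:
  assumes "finite F" "F0 \<subseteq> F"
  shows "op_bound (op_diff (partial_sum F) series_sum) (M * norm2 (restrict_vec (- F0) w))"
  unfolding op_bound_def
proof (intro ballI)
  fix \<xi> :: "'a vec"
  assume \<xi>: "\<xi> \<in> ell2"
  let ?tail = "\<lambda>h. \<Sum>\<^sub>\<infinity>g\<in>- F. u g \<xi> h"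
  have "op_diff (partial_sum F) series_sum \<xi> h = - ?tail h" for h
  proof -
    have "(\<Sum>\<^sub>\<infinity>g\<in>F \<union> - F. u g \<xi> h) = (\<Sum>\<^sub>\<infinity>g\<in>F. u g \<xi> h) + ?tail h"
      using summable_on_terms[OF \<xi>] by (intro infsum_Un_disjoint) auto
    then show ?thesis
      using assms(1) by (simp add: op_diff_def partial_sum_def series_sum_def)
  qed
  then show "op_diff (partial_sum F) series_sum \<xi> \<in> ell2 \<and>
      norm2 (op_diff (partial_sum F) series_sum \<xi>) \<le> M * norm2 (restrict_vec (- F0) w) * norm2 \<xi>"
    using tail_sum_norm2_le[OF assms(2) \<xi>] ell2_norm2_le_dominated[of ?tail "op_diff (partial_sum F) series_sum \<xi>"]
    by simp
qed

lemma converges_to_series_sum: "converges_to series_sum"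
  unfolding converges_to_def
proof (intro allI impI)
  fix \<epsilon> :: real
  assume "0 < \<epsilon>"
  then obtain F0 where F0: "finite F0" "norm2 (restrict_vec (- F0) w) \<le> \<epsilon> / (M + 1)"
    using ell2_small_tail[OF w_ell2, of "\<epsilon> / (M + 1)"] M_nonneg by auto
  have "M * norm2 (restrict_vec (- F0) w) \<le> M * (\<epsilon> / (M + 1))"
    using F0(2) M_nonneg by (rule mult_left_mono)
  also have "\<dots> \<le> \<epsilon>"
    using M_nonneg \<open>0 < \<epsilon>\<close> by (simp add: field_simps)
  finally have "op_bound (op_diff (partial_sum F) series_sum) \<epsilon>" if "finite F" "F0 \<subseteq> F" for F
    using partial_sum_tail_op_bound[OF that] by (rule op_bound_mono[rotated])
  with F0(1) show "\<exists>F0. finite F0 \<and>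
      (\<forall>F. finite F \<and> F0 \<subseteq> F \<longrightarrow> op_bound (op_diff (partial_sum F) series_sum) \<epsilon>)"
    by blast
qed

lemma opnorm_le_if_converges_to:
  assumes "converges_to y"
  shows "opnorm y \<le> M * norm2 w"
proof (rule opnorm_le_epsilon)
  show "0 \<le> M * norm2 w"
    using M_nonneg by (simp add: norm2_nonneg)
  fix \<epsilon> :: real
  assume "0 < \<epsilon>"
  then obtain F0 where F0: "finite F0" "op_bound (op_diff (partial_sum F0) y) \<epsilon>"
    using assms unfolding converges_to_def by blast
  show "op_bound y (M * norm2 w + \<epsilon>)"
    unfolding op_bound_def
  proof (intro ballI)
    fix \<xi> :: "'a vec"
    assume \<xi>: "\<xi> \<in> ell2"
    have "norm2 (restrict_vec F0 w) \<le> norm2 w"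
      using w_ell2 by (rule norm2_restrict_vec_le)
    then have partial: "partial_sum F0 \<xi> \<in> ell2 \<and> norm2 (partial_sum F0 \<xi>) \<le> M * norm2 w * norm2 \<xi>"
      using partial_sum_bound[OF F0(1) \<xi>] M_nonneg norm2_nonneg[of \<xi>]
      by (auto simp: partial_sum_def intro: order_trans mult_right_mono mult_left_mono)
    have diff: "op_diff (partial_sum F0) y \<xi> \<in> ell2 \<and> norm2 (op_diff (partial_sum F0) y \<xi>) \<le> \<epsilon> * norm2 \<xi>"
      using F0(2) \<xi> by (simp add: op_bound_def)
    have "cmod (y \<xi> h) \<le> cmod (partial_sum F0 \<xi> h) + cmod (op_diff (partial_sum F0) y \<xi> h)" for h
      using norm_triangle_ineq4[of "partial_sum F0 \<xi> h" "op_diff (partial_sum F0) y \<xi> h"]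
      by (simp add: op_diff_def)
    with partial diff show "y \<xi> \<in> ell2 \<and> norm2 (y \<xi>) \<le> (M * norm2 w + \<epsilon>) * norm2 \<xi>"
      using ell2_norm2_triangle[of "partial_sum F0 \<xi>" "op_diff (partial_sum F0) y \<xi>" "y \<xi>"]
      by (auto simp: distrib_right)
  qed
qed

end

lemma mcf_dominated_operator_series:
  assumes "\<forall>g. 0 \<le> \<kappa> g" "decay_bound \<kappa> C" "0 \<le> C" "\<forall>g. cmod (\<psi> g) * \<kappa> g \<le> K"
    and "\<forall>a b. cmod (\<sigma> a b) = 1" "hat x \<in> ell2"
  shows "dominated_operator_series (\<lambda>g \<xi> h. \<psi> g * hat x g * Lam \<sigma> g \<xi> h) (hat x) (C * K)"
proof
  have "0 \<le> cmod (\<psi> g) * \<kappa> g" for g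
    using assms(1) by simp
  then have "0 \<le> K"
    using assms(4) order.trans by blast
  then show "0 \<le> C * K"
    using assms(3) by simp
  have coeff_bound: "C * norm2_kappa \<kappa> (restrict_vec S (\<lambda>g. \<psi> g * hat x g)) * norm2 \<xi>
      \<le> C * K * norm2 (restrict_vec S (hat x)) * norm2 \<xi>" for S and \<xi> :: "'a vec"
  proof -
    have "restrict_vec S (\<lambda>g. \<psi> g * hat x g) = (\<lambda>g. \<psi> g * restrict_vec S (hat x) g)"
      by (auto simp: restrict_vec_def)
    then have "norm2_kappa \<kappa> (restrict_vec S (\<lambda>g. \<psi> g * hat x g)) \<le> K * norm2 (restrict_vec S (hat x))"
      using assms(1,4,6) by (simp add: norm2_kappa_mult_le ell2_restrict_vec)
    then have "C * norm2_kappa \<kappa> (restrict_vec S (\<lambda>g. \<psi> g * hat x g)) \<le> C * (K * norm2 (restrict_vec S (hat x)))"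
      using assms(3) by (rule mult_left_mono)
    from mult_right_mono[OF this norm2_nonneg] show ?thesis
      by (simp only: mult.assoc)
  qed
  fix S :: "'a set" and \<xi> :: "'a vec"
  assume "finite S" "\<xi> \<in> ell2"
  note twisted = twisted_sum_norm2_le[OF assms(5,2) this] twisted_abs_sum_le[OF assms(5,2) this]
  show "(\<lambda>h. \<Sum>g\<in>S. \<psi> g * hat x g * Lam \<sigma> g \<xi> h) \<in> ell2 \<and>
      norm2 (\<lambda>h. \<Sum>g\<in>S. \<psi> g * hat x g * Lam \<sigma> g \<xi> h) \<le> C * K * norm2 (restrict_vec S (hat x)) * norm2 \<xi>"
    using twisted(1)[of "\<lambda>g. \<psi> g * hat x g"] coeff_bound[of S \<xi>] by auto
  have "C * K * norm2 (restrict_vec S (hat x)) * norm2 \<xi> \<le> C * K * norm2 (hat x) * norm2 \<xi>"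
    using \<open>0 \<le> C * K\<close> assms(6)
    by (intro mult_right_mono mult_left_mono norm2_restrict_vec_le norm2_nonneg)
  then show "(\<Sum>g\<in>S. cmod (\<psi> g * hat x g * Lam \<sigma> g \<xi> h)) \<le> C * K * norm2 (hat x) * norm2 \<xi>" for h
    using twisted(2)[of "\<lambda>g. \<psi> g * hat x g" h] coeff_bound[of S \<xi>] by linarith
qed (fact assms(6))

lemma
  assumes "\<forall>g. 0 \<le> \<kappa> g" "decay_bound \<kappa> C" "0 \<le> C" "\<forall>g. cmod (\<psi> g) * \<kappa> g \<le> K"
    and "\<forall>a b. cmod (\<sigma> a b) = 1" "op_bound x c" "0 \<le> c"
  shows mcf_converges_to_exists: "\<exists>y. mcf_converges_to \<sigma> \<psi> x y"
    and opnorm_le_if_mcf_converges_to: "mcf_converges_to \<sigma> \<psi> x y \<Longrightarrow> opnorm y \<le> C * K * opnorm x"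
proof -
  have "op_bound x (opnorm x)"
    using assms(6,7) by (rule op_bound_opnorm)
  then have hat: "hat x \<in> ell2" "norm2 (hat x) \<le> opnorm x"
    by (simp_all add: norm2_hat_le)
  interpret dominated_operator_series "\<lambda>g \<xi> h. \<psi> g * hat x g * Lam \<sigma> g \<xi> h" "hat x" "C * K"
    using assms(1-5) hat(1) by (rule mcf_dominated_operator_series)
  have converges: "mcf_converges_to \<sigma> \<psi> x = converges_to"
    by (simp add: fun_eq_iff mcf_converges_to_def converges_to_def partial_sum_def mcf_partial_def)
  show "\<exists>y. mcf_converges_to \<sigma> \<psi> x y"
    using converges_to_series_sum by (auto simp: converges)
  assume "mcf_converges_to \<sigma> \<psi> x y"
  then have "opnorm y \<le> C * K * norm2 (hat x)"
    by (simp add: converges opnorm_le_if_converges_to)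
  also have "\<dots> \<le> C * K * opnorm x"
    using hat(2) M_nonneg by (rule mult_left_mono)
  finally show "opnorm y \<le> C * K * opnorm x" .
qed

theorem proposition4p8:
  fixes \<kappa> :: "'g::group_add \<Rightarrow> real" and \<psi> :: "'g \<Rightarrow> complex"
    and \<sigma> :: "'g \<Rightarrow> 'g \<Rightarrow> complex" and C K :: real
  assumes "\<forall>g. 1 \<le> \<kappa> g"
    and "kappa_decaying \<kappa>"
    and "C = decay_constant \<kappa>"
    and "bdd_above (range (\<lambda>g. cmod (\<psi> g) * \<kappa> g))"
    and "K = (SUP g. cmod (\<psi> g) * \<kappa> g)"
    and "normalized_2cocycle \<sigma>"
  shows "\<psi> \<in> MCF \<sigma> \<and> (\<forall>x\<in>Cred \<sigma>. opnorm (Mmult \<sigma> \<psi> x) \<le> C * K * opnorm x)"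
proof -
  have \<kappa>: "\<forall>g. 0 \<le> \<kappa> g"
    using assms(1) by (meson order.trans zero_le_one)
  have C: "decay_bound \<kappa> C" "0 \<le> C"
    using decay_bound_decay_constant[OF assms(2)] decay_constant_nonneg[OF assms(2)] assms(3) by simp_all
  have K: "\<forall>g. cmod (\<psi> g) * \<kappa> g \<le> K"
    unfolding assms(5) using assms(4) by (auto intro: cSUP_upper)
  have \<sigma>: "\<forall>a b. cmod (\<sigma> a b) = 1"
    using assms(6) by (simp add: normalized_2cocycle_def)
  have "(\<exists>y. mcf_converges_to \<sigma> \<psi> x y) \<and> opnorm (Mmult \<sigma> \<psi> x) \<le> C * K * opnorm x"
    if x: "x \<in> Cred \<sigma>" for x
  proof -
    obtain c where c: "op_bound x c" "0 \<le> c"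
      using Cred_op_bound[OF assms(6) x] .
    note converges = mcf_converges_to_exists[OF \<kappa> C K \<sigma> c]
    then have "mcf_converges_to \<sigma> \<psi> x (Mmult \<sigma> \<psi> x)"
      unfolding Mmult_def by (rule someI_ex)
    with converges show ?thesis
      using opnorm_le_if_mcf_converges_to[OF \<kappa> C K \<sigma> c] by blast
  qed
  then show ?thesis
    by (simp add: MCF_def)
qed

end
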